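(* Let $F:\mathbb{R}^d\to\mathbb{R}^d$ be $L$-Lipschitz and $\mu$-quasi strongly monotone with respect to $x^*$ where $F(x^* )=0$. Consider the deterministic past extragradient method: given $x_0$, $\hat x_{-1}=x_0$, and for $k\ge0$, $\hat x_k=x_k-\omega F(\hat x_{k-1})$, $x_{k+1}=x_k-\omega F(\hat x_k)$, with $0<\omega\le\frac1{4L}$. Then for all $k\ge0$, $$R_k^2\le\Big(1-\frac{\omega\mu}{2}\Big)^kR_0^2,\qquad R_k^2:=\|x_k-x^*\|^2+\|x_k-\hat x_{k-1}\|^2 .$$
   Context: $L$-Lipschitz: $\|F(x)-F(y)\|\le L\|x-y\|$. $\mu$-quasi strongly monotone ($\mu>0$): $\langle F(x),x-x^*\rangle\ge\mu\|x-x^*\|^2$ for all $x$. (This is the special case of stochastic past extragradient with exact operator evaluations, i.e. Expected Residual parameter $\delta=0$ and $\sigma_*^2=0$.) *)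

theory Defs
  imports "HOL-Analysis.Analysis"
begin

text \<open>Deterministic past extragradient. pe_state F w x0 k = (x_k, xhat_{k-1}),
with xhat_{-1} = x0, xhat_k = x_k - w F(xhat_{k-1}), x_{k+1} = x_k - w F(xhat_k).\<close>

primrec pe_state :: "('a::real_normed_vector \<Rightarrow> 'a) \<Rightarrow> real \<Rightarrow> 'a \<Rightarrow> nat \<Rightarrow> 'a \<times> 'a" where
  "pe_state F w x0 0 = (x0, x0)"
| "pe_state F w x0 (Suc k) =
     (let xk = fst (pe_state F w x0 k);
          xh = xk - w *\<^sub>R F (snd (pe_state F w x0 k))
      in (xk - w *\<^sub>R F xh, xh))"

definition pe_x :: "('a::real_normed_vector \<Rightarrow> 'a) \<Rightarrow> real \<Rightarrow> 'a \<Rightarrow> nat \<Rightarrow> 'a" where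
  "pe_x F w x0 k = fst (pe_state F w x0 k)"

definition pe_xhat :: "('a::real_normed_vector \<Rightarrow> 'a) \<Rightarrow> real \<Rightarrow> 'a \<Rightarrow> nat \<Rightarrow> 'a" where
  "pe_xhat F w x0 k = snd (pe_state F w x0 (Suc k))"

definition pe_xhat_prev :: "('a::real_normed_vector \<Rightarrow> 'a) \<Rightarrow> real \<Rightarrow> 'a \<Rightarrow> nat \<Rightarrow> 'a" where
  "pe_xhat_prev F w x0 k = snd (pe_state F w x0 k)"

end

theory Submission
  imports Defs
begin

text \<open>With \<open>g' = F xhat_{k-1}\<close> and \<open>g = F xhat_k\<close>, expanding squares gives the exact identity
  \<open>R_{k+1} = |x_k - x*|^2 - 2\<omega> <g, xhat_k - x*> + 2\<omega>^2 |g - g'|^2 - \<omega>^2 |g'|^2\<close>.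
  Quasi strong monotonicity at \<open>xhat_k\<close> bounds the inner product below by \<open>\<mu> |xhat_k - x*|^2\<close>,
  which is at least \<open>|x_k - x*|^2/2 - \<omega>^2 |g'|^2\<close>; Lipschitz continuity bounds \<open>|g - g'|^2\<close> by
  \<open>L^2 |xhat_k - xhat_{k-1}|^2 \<le> 2L^2 (\<omega>^2 |g'|^2 + |x_k - xhat_{k-1}|^2)\<close>. Since \<open>\<omega>\<mu> \<le> \<omega>L \<le> 1/4\<close>,
  the total coefficient of \<open>|g'|^2\<close> is nonpositive, leaving
  \<open>R_{k+1} \<le> (1 - \<omega>\<mu>) |x_k - x*|^2 + |x_k - xhat_{k-1}|^2/4 \<le> (1 - \<omega>\<mu>/2) R_k\<close>.\<close>

lemma norm_add_squared_le: "(norm (a + b))\<^sup>2 \<le> 2 * (norm a)\<^sup>2 + 2 * (norm b)\<^sup>2"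
proof -
  have "(norm (a + b))\<^sup>2 \<le> (norm a + norm b)\<^sup>2"
    by (simp add: norm_triangle_ineq power_mono)
  also have "\<dots> \<le> 2 * (norm a)\<^sup>2 + 2 * (norm b)\<^sup>2"
    using zero_le_power2[of "norm a - norm b"] by (simp add: power2_eq_square algebra_simps)
  finally show ?thesis .
qed

lemma quasi_strongly_monotone_le_lipschitz:
  fixes F :: "'a::euclidean_space \<Rightarrow> 'a"
  assumes "\<And>x y. norm (F x - F y) \<le> L * norm (x - y)"
    and "\<And>x. inner (F x) (x - xstar) \<ge> \<mu> * (norm (x - xstar))\<^sup>2"
    and "F xstar = 0"
  shows "\<mu> \<le> L"
proof -
  obtain v :: 'a where "norm v = 1"
    using nonempty_Basis norm_Basis by blast
  then have "\<mu> = \<mu> * (norm (xstar + v - xstar))\<^sup>2" by simp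
  also have "\<dots> \<le> inner (F (xstar + v)) (xstar + v - xstar)" by (rule assms(2))
  also have "\<dots> \<le> norm (F (xstar + v) - F xstar) * norm (xstar + v - xstar)"
    using norm_cauchy_schwarz assms(3) by simp
  also have "\<dots> \<le> L" using assms(1)[of "xstar + v" xstar] \<open>norm v = 1\<close> by simp
  finally show ?thesis .
qed

lemma past_extragradient_step_identity:
  fixes x xstar g g' :: "'a::real_inner"
  assumes "xh = x - \<omega> *\<^sub>R g'" and "x' = x - \<omega> *\<^sub>R g"
  shows "(norm (x' - xstar))\<^sup>2 + (norm (x' - xh))\<^sup>2
    = (norm (x - xstar))\<^sup>2 - 2 * \<omega> * inner g (xh - xstar)
      + 2 * \<omega>\<^sup>2 * (norm (g - g'))\<^sup>2 - \<omega>\<^sup>2 * (norm g')\<^sup>2"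
  unfolding assms power2_norm_eq_inner
  by (simp add: inner_diff_left inner_diff_right inner_commute algebra_simps power2_eq_square)

lemma past_extragradient_step_contraction:
  fixes F :: "'a::real_inner \<Rightarrow> 'a" and x xh' xstar :: 'a
  assumes lip: "\<And>x y. norm (F x - F y) \<le> L * norm (x - y)"
    and qsm: "\<And>x. inner (F x) (x - xstar) \<ge> \<mu> * (norm (x - xstar))\<^sup>2"
    and "0 \<le> \<mu>" "\<mu> \<le> L" "0 < \<omega>" "\<omega> * L \<le> 1/4"
  defines "xh \<equiv> x - \<omega> *\<^sub>R F xh'"
  shows "(norm (x - \<omega> *\<^sub>R F xh - xstar))\<^sup>2 + (norm (x - \<omega> *\<^sub>R F xh - xh))\<^sup>2
    \<le> (1 - \<omega> * \<mu> / 2) * ((norm (x - xstar))\<^sup>2 + (norm (x - xh'))\<^sup>2)"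
proof -
  define A where "A = (norm (x - xstar))\<^sup>2"
  define B where "B = (norm (x - xh'))\<^sup>2"
  define W where "W = \<omega>\<^sup>2 * (norm (F xh'))\<^sup>2"
  define s where "s = \<omega> * \<mu>"
  define t where "t = \<omega> * L"
  have "0 \<le> s" "s \<le> t" "t \<le> 1/4"
    using assms(3-6) unfolding s_def t_def by (auto intro: mult_left_mono)
  then have "t\<^sup>2 \<le> 1/16"
    using power_mono[of t "1/4" 2] by (simp add: power_divide)
  have "A \<ge> 0" "B \<ge> 0" "W \<ge> 0" unfolding A_def B_def W_def by simp_all
  have qsm_at_xh: "s * (norm (xh - xstar))\<^sup>2 \<le> \<omega> * inner (F xh) (xh - xstar)"
    using mult_left_mono[OF qsm[of xh], of \<omega>] \<open>0 < \<omega>\<close> unfolding s_def by simp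
  have "A \<le> 2 * (norm (xh - xstar))\<^sup>2 + 2 * W"
    using norm_add_squared_le[of "xh - xstar" "\<omega> *\<^sub>R F xh'"] \<open>0 < \<omega>\<close>
    unfolding A_def W_def xh_def by (simp add: power_mult_distrib)
  then have xh_lower: "s * (A / 2 - W) \<le> s * (norm (xh - xstar))\<^sup>2"
    using \<open>0 \<le> s\<close> by (intro mult_left_mono) auto
  have lip_sq: "(norm (F xh - F xh'))\<^sup>2 \<le> L\<^sup>2 * (norm (xh - xh'))\<^sup>2"
    using power_mono[OF lip[of xh xh'] norm_ge_zero, of 2] by (simp add: power_mult_distrib)
  have lip_scaled: "\<omega>\<^sup>2 * (norm (F xh - F xh'))\<^sup>2 \<le> t\<^sup>2 * (norm (xh - xh'))\<^sup>2"
    using mult_left_mono[OF lip_sq, of "\<omega>\<^sup>2"] unfolding t_def by (simp add: power_mult_distrib mult.assoc)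
  have "(norm (xh - xh'))\<^sup>2 \<le> 2 * B + 2 * W"
    using norm_add_squared_le[of "x - xh'" "- (\<omega> *\<^sub>R F xh')"] \<open>0 < \<omega>\<close>
    unfolding B_def W_def xh_def by (simp add: power_mult_distrib algebra_simps)
  then have drift: "t\<^sup>2 * (norm (xh - xh'))\<^sup>2 \<le> t\<^sup>2 * (2 * B + 2 * W)"
    by (intro mult_left_mono) auto
  have "(2 * s + 4 * t\<^sup>2 - 1) * W \<le> 0"
    using \<open>s \<le> t\<close> \<open>t \<le> 1/4\<close> \<open>t\<^sup>2 \<le> 1/16\<close> \<open>W \<ge> 0\<close> by (intro mult_nonpos_nonneg) auto
  have "4 * t\<^sup>2 * B \<le> B / 4"
    using mult_right_mono[OF \<open>t\<^sup>2 \<le> 1/16\<close> \<open>B \<ge> 0\<close>] by simp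
  have "(norm (x - \<omega> *\<^sub>R F xh - xstar))\<^sup>2 + (norm (x - \<omega> *\<^sub>R F xh - xh))\<^sup>2
      = A - 2 * (\<omega> * inner (F xh) (xh - xstar)) + 2 * (\<omega>\<^sup>2 * (norm (F xh - F xh'))\<^sup>2) - W"
    using past_extragradient_step_identity[OF xh_def[THEN meta_eq_to_obj_eq] refl, where xstar=xstar]
    unfolding A_def W_def by simp
  also have "\<dots> \<le> A - 2 * s * (A / 2 - W) + 2 * t\<^sup>2 * (2 * B + 2 * W) - W"
    using qsm_at_xh xh_lower lip_scaled drift by simp
  also have "\<dots> = (1 - s) * A + 4 * t\<^sup>2 * B + (2 * s + 4 * t\<^sup>2 - 1) * W"
    by (simp add: algebra_simps)
  also have "\<dots> \<le> (1 - s) * A + B / 4"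
    using \<open>(2 * s + 4 * t\<^sup>2 - 1) * W \<le> 0\<close> \<open>4 * t\<^sup>2 * B \<le> B / 4\<close> by simp
  also have "\<dots> \<le> (1 - s / 2) * (A + B)"
  proof -
    have "0 \<le> s * A" "s * B \<le> B / 4"
      using \<open>0 \<le> s\<close> \<open>A \<ge> 0\<close> \<open>B \<ge> 0\<close> \<open>s \<le> t\<close> \<open>t \<le> 1/4\<close> mult_right_mono[of s "1/4" B]
      by simp_all
    moreover have "(1 - s / 2) * (A + B) - ((1 - s) * A + B / 4) = s * A / 2 + 3 * B / 4 - s * B / 2"
      by (simp add: field_simps)
    ultimately show ?thesis using \<open>B \<ge> 0\<close> by linarith
  qed
  finally show ?thesis unfolding A_def B_def s_def .
qed

definition pe_potential :: "('a::real_normed_vector \<Rightarrow> 'a) \<Rightarrow> real \<Rightarrow> 'a \<Rightarrow> 'a \<Rightarrow> nat \<Rightarrow> real" where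
  "pe_potential F \<omega> x0 xstar k =
     (norm (pe_x F \<omega> x0 k - xstar))\<^sup>2 + (norm (pe_x F \<omega> x0 k - pe_xhat_prev F \<omega> x0 k))\<^sup>2"

lemma pe_xhat_prev_Suc:
  "pe_xhat_prev F \<omega> x0 (Suc k) = pe_x F \<omega> x0 k - \<omega> *\<^sub>R F (pe_xhat_prev F \<omega> x0 k)"
  by (simp add: pe_x_def pe_xhat_prev_def Let_def)

lemma pe_x_Suc:
  "pe_x F \<omega> x0 (Suc k) = pe_x F \<omega> x0 k - \<omega> *\<^sub>R F (pe_xhat_prev F \<omega> x0 (Suc k))"
  by (simp add: pe_x_def pe_xhat_prev_def Let_def)

lemma pe_potential_Suc_le:
  fixes F :: "'a::real_inner \<Rightarrow> 'a"
  assumes "\<And>x y. norm (F x - F y) \<le> L * norm (x - y)"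
    and "\<And>x. inner (F x) (x - xstar) \<ge> \<mu> * (norm (x - xstar))\<^sup>2"
    and "0 \<le> \<mu>" "\<mu> \<le> L" "0 < \<omega>" "\<omega> * L \<le> 1/4"
  shows "pe_potential F \<omega> x0 xstar (Suc k) \<le> (1 - \<omega> * \<mu> / 2) * pe_potential F \<omega> x0 xstar k"
  using past_extragradient_step_contraction[OF assms,
      of "pe_x F \<omega> x0 k" "pe_xhat_prev F \<omega> x0 k"]
  unfolding pe_potential_def pe_x_Suc[of F \<omega> x0 k] pe_xhat_prev_Suc by simp

lemma le_power_mult_of_Suc_le_mult:
  fixes f :: "nat \<Rightarrow> 'a::linordered_semidom"
  assumes "0 \<le> q" and "\<And>k. f (Suc k) \<le> q * f k"
  shows "f k \<le> q ^ k * f 0"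
proof (induction k)
  case 0
  show ?case by simp
next
  case (Suc k)
  have "f (Suc k) \<le> q * f k" by (rule assms(2))
  also have "\<dots> \<le> q * (q ^ k * f 0)" using Suc.IH assms(1) by (rule mult_left_mono)
  finally show ?case by (simp add: mult.assoc)
qed

theorem corollary4p2:
  fixes F :: "real ^ 'd \<Rightarrow> real ^ 'd" and xstar x0 :: "real ^ 'd"
    and L \<mu> \<omega> :: real and k :: nat
  assumes lip: "\<And>x y. norm (F x - F y) \<le> L * norm (x - y)"
    and qsm: "\<mu> > 0" "\<And>x. inner (F x) (x - xstar) \<ge> \<mu> * (norm (x - xstar))\<^sup>2"
    and root: "F xstar = 0"
    and step: "0 < \<omega>" "\<omega> \<le> 1 / (4 * L)"
  shows "(norm (pe_x F \<omega> x0 k - xstar))\<^sup>2 + (norm (pe_x F \<omega> x0 k - pe_xhat_prev F \<omega> x0 k))\<^sup>2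
         \<le> (1 - \<omega> * \<mu> / 2) ^ k * ((norm (pe_x F \<omega> x0 0 - xstar))\<^sup>2 + (norm (pe_x F \<omega> x0 0 - pe_xhat_prev F \<omega> x0 0))\<^sup>2)"
proof -
  have "0 < 1 / (4 * L)"
    using step by linarith
  then have "L > 0" by simp
  have "\<mu> \<le> L"
    using lip qsm(2) root by (rule quasi_strongly_monotone_le_lipschitz)
  have "\<omega> * L \<le> 1/4"
    using step \<open>L > 0\<close> by (simp add: field_simps)
  moreover have "\<omega> * \<mu> \<le> \<omega> * L"
    using \<open>\<mu> \<le> L\<close> step(1) by simp
  ultimately have "0 \<le> 1 - \<omega> * \<mu> / 2" by linarith
  then have "pe_potential F \<omega> x0 xstar k \<le> (1 - \<omega> * \<mu> / 2) ^ k * pe_potential F \<omega> x0 xstar 0"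
    using pe_potential_Suc_le[OF lip qsm(2) less_imp_le[OF qsm(1)] \<open>\<mu> \<le> L\<close> step(1)
        \<open>\<omega> * L \<le> 1/4\<close>]
    by (rule le_power_mult_of_Suc_le_mult)
  then show ?thesis unfolding pe_potential_def .
qed

end
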